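(* Let $l$ be a prime number and let $a,b,c\in\mathbb{Z}$ satisfy $\gcd(a,b)=1$ and $(a-b)^4+a^4+(a+b)^4=c^l$. Let $K=\mathbb{Q}(\sqrt{30})$ and let $E_1,E_2$ be the elliptic curves over $K$ $$E_1:\ y^2=x^3+60a\,x^2+30\big((15+3\sqrt{30})a^2+\sqrt{30}\,b^2\big)x,$$ $$E_2:\ y^2=x^3+40b\,x^2+20\big(\sqrt{30}\,a^2+(10+2\sqrt{30})b^2\big)x,$$ with $j$-invariants $j_1(a,b)=j(E_1)$ and $j_2(a,b)=j(E_2)$. Then $j_1(a,b)$ and $j_2(a,b)$ are not integral. Moreover, there exists a prime of $K$ of residue characteristic $>5$ at which both $j_1(a,b)$ and $j_2(a,b)$ are non-integral. *)

theory Defs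
  imports Complex_Main "HOL-Computational_Algebra.Primes"
begin

text \<open>The field K = Q(sqrt 30) is realised as the subfield {p + q sqrt 30 | p q rational} of the reals.
  Since 30 is squarefree and 30 = 2 mod 4, its ring of integers is Z[sqrt 30].\<close>

definition K :: "real set" where
  "K = {of_rat p + of_rat q * sqrt 30 | p q. True}"

definition OK :: "real set" where
  "OK = {of_int m + of_int n * sqrt 30 | m n. True}"

definition prime_of_K :: "real set \<Rightarrow> bool" where
  "prime_of_K P \<longleftrightarrow>
     P \<subseteq> OK \<and> 0 \<in> P \<and>
     (\<forall>x\<in>P. \<forall>y\<in>P. x + y \<in> P) \<and>
     (\<forall>x\<in>P. -x \<in> P) \<and>
     (\<forall>x\<in>P. \<forall>r\<in>OK. r * x \<in> P) \<and>
     P \<noteq> OK \<and> P \<noteq> {0} \<and>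
     (\<forall>x\<in>OK. \<forall>y\<in>OK. x * y \<in> P \<longrightarrow> x \<in> P \<or> y \<in> P)"

definition residue_char :: "real set \<Rightarrow> nat \<Rightarrow> bool" where
  "residue_char P p \<longleftrightarrow> prime p \<and> real p \<in> P"

text \<open>x in K is integral at P iff it lies in the localisation of OK at P.\<close>
definition integral_at :: "real set \<Rightarrow> real \<Rightarrow> bool" where
  "integral_at P x \<longleftrightarrow> (\<exists>s\<in>OK - P. s * x \<in> OK)"

definition j_invariant :: "real \<Rightarrow> real \<Rightarrow> real \<Rightarrow> real \<Rightarrow> real \<Rightarrow> real" where
  "j_invariant a1 a2 a3 a4 a6 =
    (let b2 = a1^2 + 4*a2; b4 = 2*a4 + a1*a3; b6 = a3^2 + 4*a6;
         b8 = a1^2*a6 + 4*a2*a6 - a1*a3*a4 + a2*a3^2 - a4^2;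
         c4 = b2^2 - 24*b4;
         disc = -(b2^2*b8) - 8*b4^3 - 27*b6^2 + 9*b2*b4*b6
     in c4^3 / disc)"

definition j1 :: "int \<Rightarrow> int \<Rightarrow> real" where
  "j1 a b = j_invariant 0 (60 * a) 0
      (30 * ((15 + 3 * sqrt 30) * a^2 + sqrt 30 * b^2)) 0"

definition j2 :: "int \<Rightarrow> int \<Rightarrow> real" where
  "j2 a b = j_invariant 0 (40 * b) 0
      (20 * (sqrt 30 * a^2 + (10 + 2 * sqrt 30) * b^2)) 0"

end

theory Submission
  imports Defs "HOL-Number_Theory.Cong"
begin

text \<open>
  Write \<open>N = (a - b)^4 + a^4 + (a + b)^4 = 3a^4 + 12a^2b^2 + 2b^4 = c^l\<close>. As \<open>a, b\<close> are
  coprime, \<open>N\<close> is divisible neither by \<open>4\<close> nor by \<open>9\<close>, and \<open>5 | N\<close> would force \<open>5 | a, b\<close>; since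
  \<open>l \<ge> 2\<close>, every prime \<open>q\<close> dividing \<open>c\<close> is therefore \<open>> 5\<close>. From \<open>225a^4 - 30(3a^2 + b^2)^2 = -15N\<close>
  the number \<open>30\<close> is a square \<open>s^2\<close> modulo \<open>q\<close>, so \<open>q\<close> splits in \<open>K\<close> and \<open>P = (q, \<surd>30 - s)\<close>
  is a prime of \<open>K\<close>. For both curves \<open>y^2 = x^3 + Ax^2 + Bx\<close> the product \<open>B(A^2 - 4B)\<close> is a
  nonzero constant times \<open>N\<close>, hence lies in \<open>P\<close>, whereas \<open>A \<in> {60a, 40b}\<close> does not. Then
  \<open>c\<^sub>4 = 16(A^2 - 3B)\<close> is a \<open>P\<close>-unit while \<open>\<Delta> = 16B^2(A^2 - 4B)\<close> lies in \<open>P\<close>, so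
  \<open>j = c\<^sub>4^3/\<Delta>\<close> has a pole at \<open>P\<close>.
\<close>

section \<open>The ring of integers \<open>\<int>[\<surd>30]\<close>\<close>

lemma int_square_eq_30_times_square: "(x::int)^2 = 30 * y^2 \<Longrightarrow> y = 0"
proof (induction "nat \<bar>y\<bar>" arbitrary: x y rule: less_induct)
  case less
  show ?case
  proof (rule ccontr)
    assume "y \<noteq> 0"
    have "even (x^2)"
      using less.prems by simp
    then obtain x' where "x = 2 * x'"
      by (auto elim: evenE)
    then have "15 * y^2 = 2 * x'^2"
      using less.prems by (simp add: power_mult_distrib)
    then have "even (15 * y^2)"
      by (metis dvd_triv_left)
    then obtain y' where y': "y = 2 * y'"
      by (auto elim: evenE)
    then have "x'^2 = 30 * y'^2"
      using \<open>15 * y^2 = 2 * x'^2\<close> by (simp add: power_mult_distrib)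
    moreover have "nat \<bar>y'\<bar> < nat \<bar>y\<bar>"
      using y' \<open>y \<noteq> 0\<close> by simp
    ultimately have "y' = 0"
      using less.hyps by blast
    with y' \<open>y \<noteq> 0\<close> show False
      by simp
  qed
qed

lemma OK_coordinates_unique:
  assumes "of_int m + of_int n * sqrt 30 = (of_int m' + of_int n' * sqrt 30 :: real)"
  shows "m = m' \<and> n = n'"
proof -
  have eq: "of_int (m - m') = of_int (n' - n) * sqrt 30"
    using assms by (simp add: algebra_simps)
  then have "(of_int (m - m') :: real)^2 = of_int (n' - n)^2 * 30"
    by (simp add: power_mult_distrib)
  then have "(m - m')^2 = 30 * (n' - n)^2"
    by (metis mult.commute of_int_eq_iff of_int_mult of_int_numeral of_int_power)
  then have "n' - n = 0"
    by (rule int_square_eq_30_times_square)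
  moreover from this have "m - m' = 0"
    using eq by (metis mult_eq_0_iff of_int_eq_0_iff)
  ultimately show ?thesis
    by simp
qed

lemma mem_OK_iff: "x \<in> OK \<longleftrightarrow> (\<exists>m n. x = of_int m + of_int n * sqrt 30)"
  unfolding OK_def by blast

lemma of_int_plus_sqrt30_mult:
  "(of_int m + of_int n * sqrt 30) * (of_int m' + of_int n' * sqrt 30) =
   (of_int (m * m' + 30 * n * n') + of_int (m * n' + n * m') * sqrt 30 :: real)"
proof -
  have "sqrt 30 * sqrt 30 = (30::real)"
    by simp
  then show ?thesis
    by (simp add: algebra_simps)
qed

lemma OK_of_int [simp]: "of_int k \<in> OK"
  unfolding mem_OK_iff by (rule exI[of _ k], rule exI[of _ 0]) simp

lemma OK_numeral [simp]: "numeral k \<in> OK"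
  using OK_of_int[of "numeral k"] by simp

lemma OK_one [simp]: "1 \<in> OK"
  using OK_of_int[of 1] by simp

lemma OK_sqrt30 [simp]: "sqrt 30 \<in> OK"
  unfolding mem_OK_iff by (rule exI[of _ 0], rule exI[of _ 1]) simp

lemma OK_add [simp]:
  assumes "x \<in> OK" "y \<in> OK"
  shows "x + y \<in> OK"
proof -
  obtain m n m' n' where "x = of_int m + of_int n * sqrt 30" "y = of_int m' + of_int n' * sqrt 30"
    using assms unfolding mem_OK_iff by blast
  then have "x + y = of_int (m + m') + of_int (n + n') * sqrt 30"
    by (simp add: algebra_simps)
  then show ?thesis
    unfolding mem_OK_iff by blast
qed

lemma OK_uminus [simp]:
  assumes "x \<in> OK"
  shows "- x \<in> OK"
proof -
  obtain m n where "x = of_int m + of_int n * sqrt 30"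
    using assms unfolding mem_OK_iff by blast
  then have "- x = of_int (- m) + of_int (- n) * sqrt 30"
    by simp
  then show ?thesis
    unfolding mem_OK_iff by blast
qed

lemma OK_diff [simp]: "x \<in> OK \<Longrightarrow> y \<in> OK \<Longrightarrow> x - y \<in> OK"
  unfolding diff_conv_add_uminus by (intro OK_add OK_uminus)

lemma OK_mult [simp]: "x \<in> OK \<Longrightarrow> y \<in> OK \<Longrightarrow> x * y \<in> OK"
  unfolding mem_OK_iff using of_int_plus_sqrt30_mult by blast

lemma OK_power [simp]: "x \<in> OK \<Longrightarrow> x ^ n \<in> OK"
  by (induction n) simp_all

section \<open>Primes of \<open>K\<close>\<close>

lemma prime_of_K_mult_left:
  assumes "prime_of_K P" "x \<in> P" "r \<in> OK"
  shows "r * x \<in> P"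
  using assms unfolding prime_of_K_def by blast

lemma prime_of_K_mult_right:
  assumes "prime_of_K P" "x \<in> P" "r \<in> OK"
  shows "x * r \<in> P"
  using prime_of_K_mult_left[OF assms] by (simp add: mult.commute)

lemma prime_of_K_mult_mem_iff:
  assumes "prime_of_K P" "x \<in> OK" "y \<in> OK"
  shows "x * y \<in> P \<longleftrightarrow> x \<in> P \<or> y \<in> P"
proof
  show "x * y \<in> P \<Longrightarrow> x \<in> P \<or> y \<in> P"
    using assms unfolding prime_of_K_def by blast
  show "x \<in> P \<or> y \<in> P \<Longrightarrow> x * y \<in> P"
    using prime_of_K_mult_left[OF assms(1) _ assms(2)] prime_of_K_mult_right[OF assms(1) _ assms(3)]
    by blast
qed

lemma prime_of_K_power_mem_iff:
  assumes "prime_of_K P" "x \<in> OK" "n > 0"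
  shows "x ^ n \<in> P \<longleftrightarrow> x \<in> P"
  using \<open>n > 0\<close>
proof (induction n rule: nat_induct_non_zero)
  case (Suc n)
  then show ?case
    using prime_of_K_mult_mem_iff[OF assms(1,2) OK_power[OF assms(2), of n]] by simp
qed simp

lemma prime_of_K_one_notin:
  assumes "prime_of_K P"
  shows "1 \<notin> P"
proof
  assume "1 \<in> P"
  then have "OK \<subseteq> P"
    using prime_of_K_mult_right[OF assms, of 1] by auto
  with assms show False
    unfolding prime_of_K_def by blast
qed

lemma prime_of_K_linear_combination:
  assumes "prime_of_K P" "x \<in> P" "y \<in> P" "r \<in> OK" "r' \<in> OK"
  shows "r * x + r' * y \<in> P"
proof -
  have "r * x \<in> P" "r' * y \<in> P"
    using prime_of_K_mult_left assms by blast+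
  with assms(1) show ?thesis
    unfolding prime_of_K_def by simp
qed

lemma integral_at_OK:
  assumes "prime_of_K P" "x \<in> OK"
  shows "integral_at P x"
  unfolding integral_at_def using assms prime_of_K_one_notin[OF assms(1)] by (intro bexI[of _ 1]) auto

definition reduction_kernel :: "int \<Rightarrow> int \<Rightarrow> real set" where
  "reduction_kernel q s = {of_int m + of_int n * sqrt 30 | m n. q dvd m + n * s}"

lemma of_int_plus_sqrt30_mem_reduction_kernel_iff:
  "of_int m + of_int n * sqrt 30 \<in> reduction_kernel q s \<longleftrightarrow> q dvd m + n * s"
proof
  assume "of_int m + of_int n * sqrt 30 \<in> reduction_kernel q s"
  then obtain m' n' where "of_int m + of_int n * sqrt 30 = of_int m' + of_int n' * sqrt 30"
    and "q dvd m' + n' * s"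
    unfolding reduction_kernel_def by blast
  then show "q dvd m + n * s"
    using OK_coordinates_unique by metis
qed (auto simp: reduction_kernel_def)

lemma of_int_mem_reduction_kernel_iff:
  "of_int k \<in> reduction_kernel q s \<longleftrightarrow> q dvd k"
  using of_int_plus_sqrt30_mem_reduction_kernel_iff[of k 0 q s] by simp

lemma reduction_kernel_subset_OK: "reduction_kernel q s \<subseteq> OK"
  unfolding reduction_kernel_def OK_def by blast

lemma reduction_kernel_add:
  assumes "x \<in> reduction_kernel q s" "y \<in> reduction_kernel q s"
  shows "x + y \<in> reduction_kernel q s"
proof -
  obtain m n m' n' where x: "x = of_int m + of_int n * sqrt 30" "q dvd m + n * s"
    and y: "y = of_int m' + of_int n' * sqrt 30" "q dvd m' + n' * s"
    using assms unfolding reduction_kernel_def by blast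
  have "x + y = of_int (m + m') + of_int (n + n') * sqrt 30"
    using x y by (simp add: algebra_simps)
  moreover have "q dvd (m + m') + (n + n') * s"
    using dvd_add[OF x(2) y(2)] by (simp add: algebra_simps)
  ultimately show ?thesis
    by (simp only: of_int_plus_sqrt30_mem_reduction_kernel_iff)
qed

lemma reduction_kernel_uminus:
  assumes "x \<in> reduction_kernel q s"
  shows "- x \<in> reduction_kernel q s"
proof -
  obtain m n where x: "x = of_int m + of_int n * sqrt 30" "q dvd m + n * s"
    using assms unfolding reduction_kernel_def by blast
  have "- x = of_int (- m) + of_int (- n) * sqrt 30"
    using x by simp
  moreover have "q dvd (- m) + (- n) * s"
    using x(2) by (metis dvd_minus_iff minus_add_distrib mult_minus_left)
  ultimately show ?thesis
    by (simp only: of_int_plus_sqrt30_mem_reduction_kernel_iff)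
qed

lemma reduction_kernel_mult_mem_iff:
  assumes q: "prime q" and s: "[s^2 = 30] (mod q)" and "x \<in> OK" "y \<in> OK"
  shows "x * y \<in> reduction_kernel q s \<longleftrightarrow> x \<in> reduction_kernel q s \<or> y \<in> reduction_kernel q s"
proof -
  have reduction_mult:
    "q dvd (m * m' + 30 * n * n') + (m * n' + n * m') * s \<longleftrightarrow> q dvd (m + n * s) * (m' + n' * s)"
    for m n m' n'
  proof -
    have "q dvd n * n' * (s^2 - 30)"
      using s by (simp add: cong_iff_dvd_diff cong_sym_eq)
    moreover have "(m + n * s) * (m' + n' * s) =
        (m * m' + 30 * n * n') + (m * n' + n * m') * s + n * n' * (s^2 - 30)"
      by (simp add: algebra_simps power2_eq_square)
    ultimately show ?thesis
      by (simp add: dvd_add_left_iff)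
  qed
  obtain m n m' n' where "x = of_int m + of_int n * sqrt 30" "y = of_int m' + of_int n' * sqrt 30"
    using assms(3,4) unfolding mem_OK_iff by blast
  then show ?thesis
    using q by (simp only: of_int_plus_sqrt30_mult of_int_plus_sqrt30_mem_reduction_kernel_iff
        reduction_mult prime_dvd_mult_iff)
qed

lemma prime_of_K_reduction_kernel:
  assumes q: "prime q" and s: "[s^2 = 30] (mod q)"
  shows "prime_of_K (reduction_kernel q s)"
proof -
  let ?P = "reduction_kernel q s"
  note mult = reduction_kernel_mult_mem_iff[OF q s]
  have ideal: "\<forall>x\<in>?P. \<forall>r\<in>OK. r * x \<in> ?P"
    using mult reduction_kernel_subset_OK by blast
  have prime: "\<forall>x\<in>OK. \<forall>y\<in>OK. x * y \<in> ?P \<longrightarrow> x \<in> ?P \<or> y \<in> ?P"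
    using mult by blast
  have zero: "0 \<in> ?P"
    using of_int_mem_reduction_kernel_iff[of 0 q s] by simp
  have "of_int q \<in> ?P"
    using of_int_mem_reduction_kernel_iff[of q q s] by simp
  then have "?P \<noteq> {0}"
    using q by auto
  have "1 \<notin> ?P"
    using of_int_mem_reduction_kernel_iff[of 1 q s] q not_prime_unit[of q] by auto
  then have "?P \<noteq> OK"
    by auto
  show ?thesis
    unfolding prime_of_K_def
    using reduction_kernel_subset_OK zero reduction_kernel_add reduction_kernel_uminus ideal prime
      \<open>?P \<noteq> OK\<close> \<open>?P \<noteq> {0}\<close>
    by (intro conjI ballI) auto
qed

section \<open>Poles of the \<open>j\<close>-invariant\<close>

lemma j_invariant_a2_a4:
  "j_invariant 0 A 0 B 0 = (16 * (A^2 - 3 * B))^3 / (16 * B^2 * (A^2 - 4 * B))"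
  unfolding j_invariant_def Let_def by (simp add: algebra_simps power2_eq_square power3_eq_cube)

lemma prime_of_K_mem_if_c4_disc_mem:
  assumes P: "prime_of_K P" and A: "A \<in> OK" and B: "B \<in> OK"
    and c4: "A^2 - 3 * B \<in> P" and disc: "B * (A^2 - 4 * B) \<in> P"
  shows "A \<in> P"
proof -
  have "B \<in> P \<or> A^2 - 4 * B \<in> P"
    using disc prime_of_K_mult_mem_iff[OF P B, of "A^2 - 4 * B"] A B by simp
  then have "A^2 \<in> P"
  proof
    assume "B \<in> P"
    have "A^2 = 1 * (A^2 - 3 * B) + 3 * B"
      by simp
    also have "\<dots> \<in> P"
      using c4 \<open>B \<in> P\<close> by (intro prime_of_K_linear_combination[OF P]) simp_all
    finally show ?thesis .
  next
    assume "A^2 - 4 * B \<in> P"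
    have "A^2 = 4 * (A^2 - 3 * B) + (- 3) * (A^2 - 4 * B)"
      by simp
    also have "\<dots> \<in> P"
      using c4 \<open>A^2 - 4 * B \<in> P\<close> by (intro prime_of_K_linear_combination[OF P]) simp_all
    finally show ?thesis .
  qed
  then show ?thesis
    using prime_of_K_power_mem_iff[OF P A, of 2] by simp
qed

lemma not_integral_at_j_invariant_a2_a4:
  assumes P: "prime_of_K P" and "2 \<notin> P"
    and A: "A \<in> OK" "A \<notin> P" and B: "B \<in> OK"
    and disc: "B * (A^2 - 4 * B) \<in> P" "B * (A^2 - 4 * B) \<noteq> 0"
  shows "\<not> integral_at P (j_invariant 0 A 0 B 0)"
proof
  define c4 where "c4 = 16 * (A^2 - 3 * B)"
  define D where "D = 16 * B^2 * (A^2 - 4 * B)"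
  have "A^2 - 3 * B \<in> OK"
    using A B by simp
  then have c4: "c4 \<in> OK"
    unfolding c4_def by (rule OK_mult[OF OK_numeral])
  assume "integral_at P (j_invariant 0 A 0 B 0)"
  then obtain t where t: "t \<in> OK" "t \<notin> P" "t * j_invariant 0 A 0 B 0 \<in> OK"
    unfolding integral_at_def by blast
  have "D \<noteq> 0"
    unfolding D_def using disc(2) by simp
  then have eq: "t * c4^3 = (t * j_invariant 0 A 0 B 0) * D"
    unfolding j_invariant_a2_a4 c4_def D_def by simp
  have "D = (16 * B) * (B * (A^2 - 4 * B))"
    unfolding D_def by (simp add: power2_eq_square)
  then have "D \<in> P"
    using prime_of_K_mult_left[OF P disc(1)] B by simp
  then have "t * c4^3 \<in> P"
    unfolding eq by (rule prime_of_K_mult_left[OF P _ t(3)])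
  then have "c4 \<in> P"
    using t prime_of_K_mult_mem_iff[OF P t(1) OK_power[OF c4]] prime_of_K_power_mem_iff[OF P c4]
    by simp
  moreover have "16 \<notin> P"
    using prime_of_K_power_mem_iff[OF P, of 2 4] \<open>2 \<notin> P\<close> by simp
  ultimately have "A^2 - 3 * B \<in> P"
    using prime_of_K_mult_mem_iff[OF P OK_numeral \<open>A^2 - 3 * B \<in> OK\<close>] unfolding c4_def by blast
  with A show False
    using prime_of_K_mem_if_c4_disc_mem[OF P A(1) B _ disc(1)] by blast
qed

section \<open>The quartic form \<open>3a^4 + 12a^2b^2 + 2b^4\<close>\<close>

definition quartic :: "int \<Rightarrow> int \<Rightarrow> int" where
  "quartic a b = 3 * a^4 + 12 * a^2 * b^2 + 2 * b^4"

lemma sum_fourth_powers_eq_quartic: "(a - b)^4 + a^4 + (a + b)^4 = quartic a b"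
  unfolding quartic_def by algebra

lemma quartic_gt_1:
  assumes "a \<noteq> 0 \<or> b \<noteq> 0"
  shows "quartic a b > 1"
proof -
  have "a^4 \<ge> 1 \<or> b^4 \<ge> 1"
    using assms by (auto simp: zero_less_power_eq int_one_le_iff_zero_less)
  moreover have "a^4 \<ge> 0" "b^4 \<ge> 0" "a^2 * b^2 \<ge> 0"
    by simp_all
  ultimately show ?thesis
    unfolding quartic_def by linarith
qed

lemma not_4_dvd_quartic:
  assumes "gcd a b = 1"
  shows "\<not> 4 dvd quartic a b"
proof
  assume four: "4 dvd quartic a b"
  then have "even (quartic a b)"
    by (rule dvd_trans[rotated]) simp
  then obtain k where a: "a = 2 * k"
    unfolding quartic_def by auto
  have "quartic a b = 4 * (12 * k^4 + 12 * k^2 * b^2) + 2 * b^4"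
    unfolding quartic_def a by algebra
  then have "4 dvd 2 * b^4"
    using four by (simp add: dvd_add_right_iff)
  then have "even (b^4)"
    using dvd_mult_cancel_left[of 2 2 "b^4"] by simp
  then have "even b"
    by simp
  then have "2 dvd gcd a b"
    using a by simp
  with assms show False
    by simp
qed

lemma not_9_dvd_quartic:
  assumes "gcd a b = 1"
  shows "\<not> 9 dvd quartic a b"
proof
  assume nine: "9 dvd quartic a b"
  then have "3 dvd quartic a b"
    by (rule dvd_trans[rotated]) simp
  then have "3 dvd 2 * b^4"
    unfolding quartic_def by (simp add: dvd_add_right_iff)
  then have "3 dvd b^4"
    by (auto simp: prime_dvd_mult_iff)
  then have "3 dvd b"
    using prime_dvd_power[of "3::int"] by auto
  then obtain k where b: "b = 3 * k" ..
  have "quartic a b = 9 * (12 * a^2 * k^2 + 18 * k^4) + 3 * a^4"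
    unfolding quartic_def b by algebra
  then have "9 dvd 3 * a^4"
    using nine by (simp add: dvd_add_right_iff)
  then have "3 dvd a^4"
    using dvd_mult_cancel_left[of 3 3 "a^4"] by simp
  then have "3 dvd a"
    using prime_dvd_power[of "3::int"] by auto
  then have "3 dvd gcd a b"
    using \<open>3 dvd b\<close> by simp
  with assms show False
    by simp
qed

lemma five_dvd_quarticD:
  assumes "5 dvd quartic a b"
  shows "5 dvd a \<and> 5 dvd b"
proof -
  have "[quartic (a mod 5) (b mod 5) = quartic a b] (mod 5)"
    unfolding quartic_def by (intro cong_add cong_mult cong_pow cong_refl) (simp_all add: cong_def)
  with assms have "quartic (a mod 5) (b mod 5) mod 5 = 0"
    by (simp add: cong_def)
  moreover have "a mod 5 \<in> {0, 1, 2, 3, 4}" "b mod 5 \<in> {0, 1, 2, 3, 4}"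
    by auto
  ultimately have "a mod 5 = 0 \<and> b mod 5 = 0"
    unfolding quartic_def by auto
  then show ?thesis
    by auto
qed

lemma prime_dvd_quartic_not_dvd:
  assumes "prime q" "q > 3" "q dvd quartic a b" "gcd a b = 1"
  shows "\<not> q dvd a" "\<not> q dvd b"
proof -
  have "\<not> q dvd 2" "\<not> q dvd 3"
    using \<open>q > 3\<close> zdvd_imp_le[of q 2] zdvd_imp_le[of q 3] by auto
  have "q dvd a \<longleftrightarrow> q dvd b"
  proof
    assume "q dvd a"
    moreover have "quartic a b = a * (3 * a^3 + 12 * a * b^2) + 2 * b^4"
      unfolding quartic_def by algebra
    ultimately have "q dvd 2 * b^4"
      using assms(3) by (simp add: dvd_add_right_iff)
    then show "q dvd b"
      using assms(1) \<open>\<not> q dvd 2\<close> by (auto simp: prime_dvd_mult_iff dest: prime_dvd_power)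
  next
    assume "q dvd b"
    moreover have "quartic a b = 3 * a^4 + b * (12 * a^2 * b + 2 * b^3)"
      unfolding quartic_def by algebra
    ultimately have "q dvd 3 * a^4"
      using assms(3) by (simp add: dvd_add_left_iff)
    then show "q dvd a"
      using assms(1) \<open>\<not> q dvd 3\<close> by (auto simp: prime_dvd_mult_iff dest: prime_dvd_power)
  qed
  moreover have "\<not> (q dvd a \<and> q dvd b)"
    using assms(1,4) by (metis gcd_greatest not_prime_unit)
  ultimately show "\<not> q dvd a" "\<not> q dvd b"
    by blast+
qed

lemma prime_gt_5_not_dvd:
  assumes "prime (q::int)" "q > 5"
  shows "\<not> q dvd 2^i * 3^j * 5^k"
proof
  assume "q dvd 2^i * 3^j * 5^k"
  then have "q dvd 2 \<or> q dvd 3 \<or> q dvd 5"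
    using assms(1) by (auto simp: prime_dvd_mult_iff dest: prime_dvd_power)
  then show False
    using assms(2) zdvd_imp_le[of q 2] zdvd_imp_le[of q 3] zdvd_imp_le[of q 5] by auto
qed

lemma prime_gt_5_if_square_dvd_quartic:
  assumes q: "prime q" and sq: "q^2 dvd quartic a b" and "gcd a b = 1"
  shows "q > 5"
proof -
  have "\<not> 2 dvd q"
  proof
    assume "2 dvd q"
    then have "4 dvd q^2"
      using dvd_power_same[of 2 q 2] by simp
    then show False
      using dvd_trans[OF _ sq] not_4_dvd_quartic[OF assms(3)] by blast
  qed
  moreover have "\<not> 3 dvd q"
  proof
    assume "3 dvd q"
    then have "9 dvd q^2"
      using dvd_power_same[of 3 q 2] by simp
    then show False
      using dvd_trans[OF _ sq] not_9_dvd_quartic[OF assms(3)] by blast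
  qed
  moreover have "q \<noteq> 5"
  proof
    assume "q = 5"
    then have "5 dvd quartic a b"
      using dvd_mult_left[of "5::int" 5] sq by (simp add: power2_eq_square)
    then have "5 dvd gcd a b"
      using five_dvd_quarticD[of a b] by simp
    with assms(3) show False
      by simp
  qed
  moreover have "q \<ge> 2"
    using q prime_ge_2_int by blast
  ultimately show "q > 5"
    by presburger
qed

lemma prime_factor_gt_5_of_quartic_power:
  assumes "prime l" "gcd a b = 1" "quartic a b = c ^ l"
  obtains q where "prime q" "q > 5" "q dvd quartic a b"
proof -
  have N: "quartic a b > 1"
    using assms(2) by (intro quartic_gt_1) auto
  have "l \<ge> 2"
    using assms(1) prime_ge_2_nat by blast
  have "c \<noteq> 0"
  proof
    assume "c = 0"
    then have "quartic a b = 0"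
      using assms(3) \<open>l \<ge> 2\<close> by simp
    with N show False
      by simp
  qed
  have "\<not> is_unit c"
  proof
    assume "is_unit c"
    then have "\<bar>quartic a b\<bar> = 1"
      using assms(3) by (simp add: power_abs)
    with N show False
      by simp
  qed
  then obtain q where q: "prime q" "q dvd c"
    using prime_divisor_exists \<open>c \<noteq> 0\<close> by blast
  have "q^2 dvd c^2"
    using q(2) by simp
  also have "c^2 dvd c^l"
    using le_imp_power_dvd[OF \<open>l \<ge> 2\<close>] .
  finally have sq: "q^2 dvd quartic a b"
    using assms(3) by simp
  then have "q dvd quartic a b"
    using dvd_mult_left[of q q] by (simp add: power2_eq_square)
  with q(1) show ?thesis
    using that prime_gt_5_if_square_dvd_quartic[OF q(1) sq assms(2)] by blast
qed

lemma square_root_of_30_mod_prime_dvd_quartic: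
  assumes q: "prime q" "q > 5" "q dvd quartic a b" and "gcd a b = 1"
  obtains s where "[s^2 = 30] (mod q)"
proof -
  define u where "u = 3 * a^2 + b^2"
  have "\<not> q dvd a"
    using prime_dvd_quartic_not_dvd(1)[OF q(1) _ q(3) assms(4)] q(2) by simp
  have "30 * u^2 - 225 * a^4 = 15 * quartic a b"
    unfolding u_def quartic_def by algebra
  then have "[30 * u^2 = 225 * a^4] (mod q)"
    using q(3) by (simp add: cong_iff_dvd_diff)
  then have key: "[225 * a^4 = 30 * u^2] (mod q)"
    by (rule cong_sym)
  have "\<not> q dvd u"
  proof
    assume "q dvd u"
    then have "q dvd 30 * u^2"
      by (simp add: power2_eq_square)
    then have "q dvd 225 * a^4"
      using cong_dvd_iff[OF key] by simp
    then show False
      using prime_gt_5_not_dvd[OF q(1,2), of 0 2 2] q(1) \<open>\<not> q dvd a\<close>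
      by (auto simp: prime_dvd_mult_iff dest: prime_dvd_power)
  qed
  then obtain v where v: "[u * v = 1] (mod q)"
    using cong_solve_coprime_int q(1) by (metis coprime_commute prime_imp_coprime)
  have "(15 * a^2 * v)^2 = (225 * a^4) * v^2"
    by (simp add: power_mult_distrib)
  also have "[(225 * a^4) * v^2 = (30 * u^2) * v^2] (mod q)"
    by (rule cong_mult[OF key cong_refl])
  also have "(30 * u^2) * v^2 = 30 * (u * v)^2"
    by (simp add: power_mult_distrib)
  also have "[30 * (u * v)^2 = 30 * 1^2] (mod q)"
    by (rule cong_mult[OF cong_refl cong_pow[OF v]])
  finally show ?thesis
    using that by simp
qed

section \<open>The two curves\<close>

lemma not_integral_at_reduction_kernel:
  assumes q: "prime q" "q > 5" and s: "[s^2 = 30] (mod q)"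
    and "\<not> q dvd m" and "B \<in> OK"
    and disc: "B * (of_int m ^ 2 - 4 * B) = of_int d" "d \<noteq> 0" "q dvd d"
  shows "\<not> integral_at (reduction_kernel q s) (j_invariant 0 (of_int m) 0 B 0)"
proof (rule not_integral_at_j_invariant_a2_a4)
  show "prime_of_K (reduction_kernel q s)"
    using q(1) s by (rule prime_of_K_reduction_kernel)
  show "2 \<notin> reduction_kernel q s"
    using of_int_mem_reduction_kernel_iff[of 2 q s] prime_gt_5_not_dvd[OF q, of 1 0 0] by simp
  show "of_int m \<notin> reduction_kernel q s"
    using of_int_mem_reduction_kernel_iff \<open>\<not> q dvd m\<close> by simp
  show "B * ((of_int m)^2 - 4 * B) \<in> reduction_kernel q s"
    unfolding disc(1) of_int_mem_reduction_kernel_iff by (rule disc(3))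
  show "B * ((of_int m)^2 - 4 * B) \<noteq> 0"
    using disc(1,2) by simp
qed (use \<open>B \<in> OK\<close> in simp_all)

lemma not_integral_at_j1:
  assumes q: "prime q" "q > 5" "q dvd quartic a b" and "gcd a b = 1" and s: "[s^2 = 30] (mod q)"
  shows "\<not> integral_at (reduction_kernel q s) (j1 a b)"
proof -
  let ?B = "30 * ((15 + 3 * sqrt 30) * of_int a^2 + sqrt 30 * of_int b^2)"
  have "\<not> q dvd a"
    using prime_dvd_quartic_not_dvd(1)[OF q(1) _ q(3) assms(4)] q(2) by simp
  then have "\<not> q dvd 60 * a"
    using prime_gt_5_not_dvd[OF q(1,2), of 2 1 1] q(1) by (simp add: prime_dvd_mult_iff)
  have "?B * ((60 * of_int a)^2 - 4 * ?B) =
      3600 * (225 * of_int a^4 - sqrt 30 ^ 2 * (3 * of_int a^2 + of_int b^2)^2)"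
    by algebra
  also have "\<dots> = -54000 * (3 * of_int a^4 + 12 * of_int a^2 * of_int b^2 + 2 * of_int b^4)"
    unfolding real_sqrt_pow2[OF zero_le_numeral] by algebra
  finally have disc: "?B * (of_int (60 * a)^2 - 4 * ?B) = of_int (-54000 * quartic a b)"
    unfolding quartic_def by simp
  have "quartic a b \<noteq> 0"
    using quartic_gt_1[of a b] assms(4) by fastforce
  moreover have "j1 a b = j_invariant 0 (of_int (60 * a)) 0 ?B 0"
    unfolding j1_def by simp
  ultimately show ?thesis
    using not_integral_at_reduction_kernel[OF q(1,2) s \<open>\<not> q dvd 60 * a\<close> _ disc] q(3) by simp
qed

lemma not_integral_at_j2:
  assumes q: "prime q" "q > 5" "q dvd quartic a b" and "gcd a b = 1" and s: "[s^2 = 30] (mod q)"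
  shows "\<not> integral_at (reduction_kernel q s) (j2 a b)"
proof -
  let ?B = "20 * (sqrt 30 * of_int a^2 + (10 + 2 * sqrt 30) * of_int b^2)"
  have "\<not> q dvd b"
    using prime_dvd_quartic_not_dvd(2)[OF q(1) _ q(3) assms(4)] q(2) by simp
  then have "\<not> q dvd 40 * b"
    using prime_gt_5_not_dvd[OF q(1,2), of 3 0 1] q(1) by (simp add: prime_dvd_mult_iff)
  have "?B * ((40 * of_int b)^2 - 4 * ?B) =
      1600 * (100 * of_int b^4 - sqrt 30 ^ 2 * (of_int a^2 + 2 * of_int b^2)^2)"
    by algebra
  also have "\<dots> = -16000 * (3 * of_int a^4 + 12 * of_int a^2 * of_int b^2 + 2 * of_int b^4)"
    unfolding real_sqrt_pow2[OF zero_le_numeral] by algebra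
  finally have disc: "?B * (of_int (40 * b)^2 - 4 * ?B) = of_int (-16000 * quartic a b)"
    unfolding quartic_def by simp
  have "quartic a b \<noteq> 0"
    using quartic_gt_1[of a b] assms(4) by fastforce
  moreover have "j2 a b = j_invariant 0 (of_int (40 * b)) 0 ?B 0"
    unfolding j2_def by simp
  ultimately show ?thesis
    using not_integral_at_reduction_kernel[OF q(1,2) s \<open>\<not> q dvd 40 * b\<close> _ disc] q(3) by simp
qed

theorem lemma4p1:
  fixes l :: nat and a b c :: int
  assumes "prime l"
    and "gcd a b = 1"
    and "(a - b)^4 + a^4 + (a + b)^4 = c ^ l"
  shows "j1 a b \<notin> OK \<and> j2 a b \<notin> OK \<and>
         (\<exists>P p. prime_of_K P \<and> residue_char P p \<and> p > 5 \<and>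
                \<not> integral_at P (j1 a b) \<and> \<not> integral_at P (j2 a b))"
proof -
  have "quartic a b = c ^ l"
    using assms(3) by (simp add: sum_fourth_powers_eq_quartic)
  then obtain q where q: "prime q" "q > 5" "q dvd quartic a b"
    using prime_factor_gt_5_of_quartic_power[OF assms(1,2)] by blast
  then obtain s where s: "[s^2 = 30] (mod q)"
    using square_root_of_30_mod_prime_dvd_quartic[OF _ _ _ assms(2)] by blast
  define P where "P = reduction_kernel q s"
  have P: "prime_of_K P"
    unfolding P_def using q(1) s by (rule prime_of_K_reduction_kernel)
  have "residue_char P (nat q)"
    unfolding residue_char_def P_def
    using q of_int_mem_reduction_kernel_iff[of q q s] by simp
  moreover have "\<not> integral_at P (j1 a b)" "\<not> integral_at P (j2 a b)"
    unfolding P_def using not_integral_at_j1[OF q assms(2) s] not_integral_at_j2[OF q assms(2) s] .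
  moreover from this have "j1 a b \<notin> OK" "j2 a b \<notin> OK"
    using integral_at_OK[OF P] by blast+
  ultimately show ?thesis
    using P q(2) by (intro conjI exI[of _ P] exI[of _ "nat q"]) auto
qed

end
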